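(* Let $g:(0,\infty)\times[0,\infty)\to\mathbb{R}$ be non-decreasing in the second variable, and assume that for some $t_0$, $S=\sup_{t>t_0,\,h,k>0}|g(t,h+k)-g(t+h,k)-g(t,h)|<\infty$. Then for any sequence $t_n\to\infty$, $$\limsup_{h\to+\infty}\limsup_{n}\frac{g(t_n,h)}{h}\le\limsup_{h\to+\infty}\limsup_{t\to+\infty}\frac{g(t,h)}{h}.$$ Moreover, for every $\kappa>0$ there is a sequence $\bar t_n\to\infty$ such that $$\limsup_{h\to+\infty}\limsup_{t\to+\infty}\frac{g(t,h)}{h}\le\liminf_{h\to+\infty}\liminf_{n}\frac{g(\bar t_n,h)}{h}+\frac{2S}{\kappa}.$$ *)

theory Defs
  imports "HOL-Analysis.Analysis"
begin

end

theory Submission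
  imports Defs
begin

text \<open>
  The defect bound gives \<open>g (t + a) h \<ge> g t (a + h) - g t a - S\<close>. Fix \<open>c < c\<^sub>1 < L\<close>, where
  \<open>L\<close> is the double limsup over \<open>t\<close>, and pick a large \<open>H\<close> and \<open>t\<close> with \<open>g (t + 1) H > c\<^sub>1 H\<close>.
  Monotonicity in \<open>h\<close> then makes \<open>F s = g t (s - t) - c (s - t)\<close> exceed \<open>F (t + 1)\<close> by about
  \<open>(c\<^sub>1 - c) H\<close> beyond the window \<open>[t + 1, t + 1 + H]\<close>, so at an approximate minimiser \<open>t'\<close> of
  \<open>F\<close> on the window every increment \<open>F (t' + h) - F t'\<close> with \<open>0 < h \<le> B\<close> exceeds \<open>-1\<close>, i.e.
  \<open>g t' h \<ge> c h - S - 1\<close>. Doing this with \<open>c\<^sub>n \<rightarrow> L\<close> and \<open>B = n\<close> yields a sequence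
  \<open>t'\<^sub>n \<rightarrow> \<infinity>\<close> along which the double liminf is at least \<open>L\<close>. The first inequality only uses \<open>t\<^sub>n \<rightarrow> \<infinity>\<close>.
\<close>

lemma Limsup_compose_filterlim_le:
  fixes X :: "'b \<Rightarrow> 'c::complete_linorder"
  assumes "filterlim f G F"
  shows "Limsup F (\<lambda>x. X (f x)) \<le> Limsup G X"
  unfolding Limsup_le_iff using assms by (auto simp: filterlim_iff dest: Limsup_lessD)

lemma less_Limsup_at_topD:
  fixes X :: "'a::linorder \<Rightarrow> 'b::complete_linorder"
  assumes "y < Limsup at_top X"
  shows "\<exists>x\<ge>N. y < X x"
proof (rule ccontr)
  assume "\<not> ?thesis"
  then have "eventually (\<lambda>x. X x \<le> y) at_top"
    unfolding eventually_at_top_linorder by (auto simp: not_less)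
  then have "Limsup at_top X \<le> y" by (rule Limsup_bounded)
  with assms show False by simp
qed

lemma real_sequence_tendsto_from_below:
  fixes L :: ereal
  assumes "L \<noteq> -\<infinity>"
  shows "\<exists>c :: nat \<Rightarrow> real. (\<forall>n. ereal (c n) < L) \<and> (\<lambda>n. ereal (c n)) \<longlonglongrightarrow> L"
proof (cases L)
  case (real l)
  have "(\<lambda>n. l + - inverse (real (Suc n))) \<longlonglongrightarrow> l"
    by (rule LIMSEQ_inverse_real_of_nat_add_minus)
  then show ?thesis
    using real by (intro exI[of _ "\<lambda>n. l + - inverse (real (Suc n))"]) auto
next
  case PInf
  then show ?thesis
    using id_nat_ereal_tendsto_PInf by (intro exI[of _ real]) auto
qed (use assms in simp)

lemma exists_almost_minimiser:
  fixes F :: "'a \<Rightarrow> real"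
  assumes "D \<noteq> {}" "bdd_below (F ` D)" "\<epsilon> > 0"
  shows "\<exists>x\<in>D. \<forall>y\<in>D. F x < F y + \<epsilon>"
proof -
  obtain x where "x \<in> D" "F x < Inf (F ` D) + \<epsilon>"
    using cInf_lessD[of "F ` D" "Inf (F ` D) + \<epsilon>"] assms by auto
  moreover have "Inf (F ` D) \<le> F y" if "y \<in> D" for y
    using assms(2) that by (intro cInf_lower) auto
  ultimately show ?thesis by force
qed

lemma le_Liminf_ratio_of_linear_lower_bounds:
  fixes u :: "nat \<Rightarrow> real \<Rightarrow> real" and c :: "nat \<Rightarrow> real"
  assumes lower: "\<And>n h. 0 < h \<Longrightarrow> h \<le> real n \<Longrightarrow> c n * h - C \<le> u n h"
    and c: "(\<lambda>n. ereal (c n)) \<longlonglongrightarrow> L"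
  shows "L \<le> Liminf at_top (\<lambda>h. liminf (\<lambda>n. ereal (u n h / h)))"
  unfolding le_Liminf_iff
proof (intro allI impI)
  fix y assume "y < L"
  then obtain z1 where z1: "y < ereal z1" "ereal z1 < L" using ereal_dense2 by blast
  then obtain z where z: "z1 < z" "ereal z < L" using ereal_dense2 by force
  have "eventually (\<lambda>n. z < c n) sequentially"
    using order_tendstoD(1)[OF c z(2)] by simp
  then obtain N where N: "\<And>n. n \<ge> N \<Longrightarrow> z < c n"
    unfolding eventually_sequentially by blast
  have "ereal z1 \<le> liminf (\<lambda>n. ereal (u n h / h))" if h: "max 1 (C / (z - z1)) \<le> h" for h
  proof (rule Liminf_bounded, unfold eventually_sequentially, intro exI allI impI)
    fix n assume n: "max N (nat \<lceil>h\<rceil>) \<le> n"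
    have h0: "h > 0" using h by auto
    have "C \<le> (z - z1) * h" using h z(1) by (simp add: field_simps)
    moreover have "h \<le> real n" using n by linarith
    then have "c n * h - C \<le> u n h" using lower[OF h0] by blast
    moreover have "z * h \<le> c n * h" using N[of n] n h0 by simp
    ultimately have "z1 * h \<le> u n h" by (simp add: algebra_simps)
    then show "ereal z1 \<le> ereal (u n h / h)" using h0 by (simp add: field_simps)
  qed
  then show "eventually (\<lambda>h. y < liminf (\<lambda>n. ereal (u n h / h))) at_top"
    unfolding eventually_at_top_linorder using z1(1) by (blast intro: order_less_le_trans)
qed

lemma mult_le_abs_mult:
  fixes c x b :: real
  assumes "0 \<le> x" "x \<le> b"
  shows "c * x \<le> \<bar>c\<bar> * b"
proof -
  have "c * x \<le> \<bar>c\<bar> * x" using assms(1) by (simp add: mult_right_mono)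
  also have "\<dots> \<le> \<bar>c\<bar> * b" using assms(2) by (simp add: mult_left_mono)
  finally show ?thesis .
qed

locale quasi_cocycle =
  fixes g :: "real \<Rightarrow> real \<Rightarrow> real" and t0 S :: real
  assumes mono: "\<And>t. t > 0 \<Longrightarrow> mono_on {0..} (g t)"
    and defect_le: "\<And>t h k. t > t0 \<Longrightarrow> t > 0 \<Longrightarrow> h > 0 \<Longrightarrow> k > 0 \<Longrightarrow>
      \<bar>g t (h + k) - g (t + h) k - g t h\<bar> \<le> S"
begin

abbreviation growth_rate :: ereal where
  "growth_rate \<equiv> Limsup at_top (\<lambda>h. Limsup at_top (\<lambda>t. ereal (g t h / h)))"

lemma defect_bound_nonneg: "S \<ge> 0"
  using defect_le[of "max t0 0 + 1" 1 1] by linarith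

lemma mono_le: "t > 0 \<Longrightarrow> 0 \<le> h \<Longrightarrow> h \<le> h' \<Longrightarrow> g t h \<le> g t h'"
  by (rule mono_onD[OF mono]) auto

lemma far_window_gain:
  assumes t: "t > t0" "t > 0" and H: "H > 0" "c1 * H < g (t + 1) H"
    and a: "H + 1 \<le> a" "a \<le> H + 1 + B"
  shows "g t 1 - c + (c1 - c) * H - S - \<bar>c\<bar> * B \<le> g t a - c * a"
proof -
  have "g t 1 + g (t + 1) H - S \<le> g t (1 + H)"
    using defect_le[OF t, of 1 H] H by auto
  also have "\<dots> \<le> g t a"
    using mono_le[OF t(2)] a H by simp
  finally have "g t 1 + c1 * H - S \<le> g t a" using H by linarith
  moreover have "c * (a - (H + 1)) \<le> \<bar>c\<bar> * B"
    using a by (intro mult_le_abs_mult) auto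
  ultimately show ?thesis by (simp add: algebra_simps)
qed

lemma window_uniform_lower_bound:
  assumes t: "t > t0" "t > 0" and H: "H > 0" "c1 * H < g (t + 1) H"
    and gain: "S + \<bar>c\<bar> * B + 2 \<le> (c1 - c) * H"
  shows "\<exists>t'\<in>{t + 1..t + 1 + H}. \<forall>h. 0 < h \<and> h \<le> B \<longrightarrow> c * h - (S + 1) \<le> g t' h"
proof -
  define D where "D = {t + 1..t + 1 + H}"
  define F where "F s = g t (s - t) - c * (s - t)" for s
  have "g t 1 - \<bar>c\<bar> * (H + 1) \<le> F s" if "s \<in> D" for s
  proof -
    have "g t 1 \<le> g t (s - t)" using mono_le[OF t(2)] that by (simp add: D_def)
    moreover have "c * (s - t) \<le> \<bar>c\<bar> * (H + 1)"
      using that by (intro mult_le_abs_mult) (auto simp: D_def)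
    ultimately show ?thesis unfolding F_def by linarith
  qed
  then have "bdd_below (F ` D)" by (auto intro!: bdd_belowI2)
  then obtain t' where t': "t' \<in> D" and almost_min: "\<And>s. s \<in> D \<Longrightarrow> F t' < F s + 1"
    using exists_almost_minimiser[of D F 1] H by (auto simp: D_def)
  have "F t' - 1 < F (t' + h)" if h: "0 < h" "h \<le> B" for h
  proof (cases "t' + h \<in> D")
    case True
    then show ?thesis using almost_min by fastforce
  next
    case False
    then have "g t 1 - c + (c1 - c) * H - S - \<bar>c\<bar> * B \<le> F (t' + h)"
      unfolding F_def using far_window_gain[OF t H, of "t' + h - t" B c] t' h by (auto simp: D_def)
    moreover have "F t' < g t 1 - c + 1"
      using almost_min[of "t + 1"] H by (simp add: D_def F_def)
    ultimately show ?thesis using gain by linarith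
  qed
  moreover have "g t (t' - t + h) - g t (t' - t) - S \<le> g t' h" if "0 < h" for h
    using defect_le[OF t, of "t' - t" h] t' that by (auto simp: D_def)
  ultimately have "c * h - (S + 1) \<le> g t' h" if "0 < h" "h \<le> B" for h
    using that by (fastforce simp: F_def algebra_simps)
  with t' show ?thesis unfolding D_def by blast
qed

lemma late_uniform_lower_bound:
  assumes "ereal c < growth_rate"
  shows "\<exists>t'\<ge>M. \<forall>h. 0 < h \<and> h \<le> B \<longrightarrow> c * h - (S + 1) \<le> g t' h"
proof -
  obtain c1 where c1: "c < c1" "ereal c1 < growth_rate"
    using ereal_dense2[OF assms] by auto
  obtain H where H: "H \<ge> max 1 ((S + \<bar>c\<bar> * B + 2) / (c1 - c))"
    and "ereal c1 < Limsup at_top (\<lambda>t. ereal (g t H / H))"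
    using less_Limsup_at_topD[OF c1(2)] by blast
  then obtain p where p: "p \<ge> max M (max (t0 + 1) 1) + 1" "ereal c1 < ereal (g p H / H)"
    using less_Limsup_at_topD by blast
  have t: "p - 1 > t0" "p - 1 > 0" and "M \<le> p" using p(1) by auto
  have H0: "H > 0" using H by simp
  have c1H: "c1 * H < g (p - 1 + 1) H" using p(2) H by (simp add: field_simps)
  have gain: "S + \<bar>c\<bar> * B + 2 \<le> (c1 - c) * H" using H c1(1) by (simp add: field_simps)
  obtain t' where t': "t' \<in> {p - 1 + 1..p - 1 + 1 + H}"
    and "\<forall>h. 0 < h \<and> h \<le> B \<longrightarrow> c * h - (S + 1) \<le> g t' h"
    using window_uniform_lower_bound[OF t H0 c1H gain] by blast
  moreover have "M \<le> t'" using t' \<open>M \<le> p\<close> by simp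
  ultimately show ?thesis by blast
qed

lemma exists_sequence_growth_rate_le_Liminf:
  "\<exists>tb :: nat \<Rightarrow> real. filterlim tb at_top sequentially \<and>
     growth_rate \<le> Liminf at_top (\<lambda>h. liminf (\<lambda>n. ereal (g (tb n) h / h)))"
proof (cases "growth_rate = -\<infinity>")
  case True
  then show ?thesis using filterlim_real_sequentially by auto
next
  case False
  then obtain c :: "nat \<Rightarrow> real"
    where c: "\<And>n. ereal (c n) < growth_rate" "(\<lambda>n. ereal (c n)) \<longlonglongrightarrow> growth_rate"
    using real_sequence_tendsto_from_below by blast
  have "\<exists>t'\<ge>real n. \<forall>h. 0 < h \<and> h \<le> real n \<longrightarrow> c n * h - (S + 1) \<le> g t' h" for n
    using late_uniform_lower_bound[OF c(1)] .
  then obtain tb where tb: "\<And>n. tb n \<ge> real n"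
    "\<And>n h. 0 < h \<Longrightarrow> h \<le> real n \<Longrightarrow> c n * h - (S + 1) \<le> g (tb n) h"
    by metis
  have "filterlim tb at_top sequentially"
    by (rule filterlim_at_top_mono[OF filterlim_real_sequentially]) (use tb(1) in auto)
  moreover have "growth_rate \<le> Liminf at_top (\<lambda>h. liminf (\<lambda>n. ereal (g (tb n) h / h)))"
    using le_Liminf_ratio_of_linear_lower_bounds[OF tb(2) c(2)] .
  ultimately show ?thesis by blast
qed

end

theorem proposition5p5:
  fixes g :: "real \<Rightarrow> real \<Rightarrow> real" and t0 :: real
  assumes mono: "\<And>t. t > 0 \<Longrightarrow> mono_on {0..} (g t)"
    and bdd: "bdd_above {\<bar>g t (h + k) - g (t + h) k - g t h\<bar> | t h k. t > t0 \<and> t > 0 \<and> h > 0 \<and> k > 0}"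
  defines "S \<equiv> Sup {\<bar>g t (h + k) - g (t + h) k - g t h\<bar> | t h k. t > t0 \<and> t > 0 \<and> h > 0 \<and> k > 0}"
  shows "(\<forall>tn :: nat \<Rightarrow> real. filterlim tn at_top sequentially \<longrightarrow>
            Limsup at_top (\<lambda>h. limsup (\<lambda>n. ereal (g (tn n) h / h)))
              \<le> Limsup at_top (\<lambda>h. Limsup at_top (\<lambda>t. ereal (g t h / h))))
       \<and> (\<forall>\<kappa> :: real. \<kappa> > 0 \<longrightarrow>
            (\<exists>tb :: nat \<Rightarrow> real. filterlim tb at_top sequentially \<and>
               Limsup at_top (\<lambda>h. Limsup at_top (\<lambda>t. ereal (g t h / h)))
                 \<le> Liminf at_top (\<lambda>h. liminf (\<lambda>n. ereal (g (tb n) h / h))) + ereal (2 * S / \<kappa>)))"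
proof -
  interpret quasi_cocycle g t0 S
  proof
    show "\<bar>g t (h + k) - g (t + h) k - g t h\<bar> \<le> S" if "t > t0" "t > 0" "h > 0" "k > 0" for t h k
      unfolding S_def using that by (intro cSup_upper[OF _ bdd]) blast
  qed (rule mono)
  have "Limsup at_top (\<lambda>h. limsup (\<lambda>n. ereal (g (tn n) h / h))) \<le> growth_rate"
    if "filterlim tn at_top sequentially" for tn :: "nat \<Rightarrow> real"
  proof (intro Limsup_mono always_eventually allI)
    fix h :: real
    show "limsup (\<lambda>n. ereal (g (tn n) h / h)) \<le> Limsup at_top (\<lambda>t. ereal (g t h / h))"
      using Limsup_compose_filterlim_le[OF that, of "\<lambda>t. ereal (g t h / h)"] .
  qed
  moreover have "\<exists>tb. filterlim tb at_top sequentially \<and>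
      growth_rate \<le> Liminf at_top (\<lambda>h. liminf (\<lambda>n. ereal (g (tb n) h / h))) + ereal (2 * S / \<kappa>)"
    if "\<kappa> > 0" for \<kappa>
  proof -
    have "0 \<le> ereal (2 * S / \<kappa>)" using defect_bound_nonneg that by simp
    then show ?thesis
      using exists_sequence_growth_rate_le_Liminf by (blast intro: order_trans add_increasing2)
  qed
  ultimately show ?thesis by blast
qed

end
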